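(* Let $p>1$ and let $\varphi(z)=az+b$ with $a,b\in\mathbb{C}$ and $0<|a|<1-|b|$. Then the spectrum of $D_\varphi$ acting on $S^p$ is $\{0\}$.
   Context: $\mathbb{D}$ is the open unit disk. For $p>1$, $H^p$ is the Hardy space on $\mathbb{D}$ with norm $\|g\|_{H^p}^p=\sup_{0<r<1}\int_0^{2\pi}|g(re^{i\theta})|^p\frac{d\theta}{2\pi}$; $S^p$ is the space of analytic $f$ on $\mathbb{D}$ with $f'\in H^p$, normed by $\|f\|_{S^p}=|f(0)|+\|f'\|_{H^p}$. $D_\varphi f=f'\circ\varphi$. *)

theory Defs
  imports "HOL-Complex_Analysis.Complex_Analysis"
begin

definition circle_mean :: "real \<Rightarrow> (complex \<Rightarrow> complex) \<Rightarrow> real \<Rightarrow> real" where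
  "circle_mean p g r = integral {0..2*pi} (\<lambda>t. norm (g (complex_of_real r * cis t)) powr p) / (2*pi)"

definition in_Hp :: "real \<Rightarrow> (complex \<Rightarrow> complex) \<Rightarrow> bool" where
  "in_Hp p g \<longleftrightarrow> g holomorphic_on ball 0 1 \<and> bdd_above (circle_mean p g ` {0<..<1})"

definition Hp_norm :: "real \<Rightarrow> (complex \<Rightarrow> complex) \<Rightarrow> real" where
  "Hp_norm p g = (SUP r\<in>{0<..<1}. circle_mean p g r) powr (1/p)"

text \<open>The space S^p. Functions are represented as total functions on complex
  that vanish outside the unit disk (so that equality of elements is equality on the disk).\<close>
definition Sp :: "real \<Rightarrow> (complex \<Rightarrow> complex) set" where
  "Sp p = {f. f holomorphic_on ball 0 1 \<and> (\<forall>z. z \<notin> ball 0 1 \<longrightarrow> f z = 0) \<and> in_Hp p (deriv f)}"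

definition Sp_norm :: "real \<Rightarrow> (complex \<Rightarrow> complex) \<Rightarrow> real" where
  "Sp_norm p f = norm (f 0) + Hp_norm p (deriv f)"

definition Dphi :: "(complex \<Rightarrow> complex) \<Rightarrow> (complex \<Rightarrow> complex) \<Rightarrow> (complex \<Rightarrow> complex)" where
  "Dphi \<phi> f = (\<lambda>z. if z \<in> ball 0 1 then deriv f (\<phi> z) else 0)"

definition op_spectrum :: "('a \<Rightarrow> complex) set \<Rightarrow> (('a \<Rightarrow> complex) \<Rightarrow> real) \<Rightarrow>
    (('a \<Rightarrow> complex) \<Rightarrow> ('a \<Rightarrow> complex)) \<Rightarrow> complex set" where
  "op_spectrum X N T = {\<mu>. \<not> (\<exists>R.
      (\<forall>f\<in>X. (\<lambda>z. \<mu> * f z - T f z) \<in> X) \<and>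
      (\<forall>g\<in>X. R g \<in> X \<and> (\<lambda>z. \<mu> * R g z - T (R g) z) = g) \<and>
      (\<forall>f\<in>X. R (\<lambda>z. \<mu> * f z - T f z) = f) \<and>
      (\<exists>C. \<forall>g\<in>X. N (R g) \<le> C * N g))}"

end

theory Submission
  imports Defs
begin

text \<open>For \<mu> \<noteq> 0 the inverse of \<mu> - D_\<phi> is the Neumann series
  g \<mapsto> \<Sum>n. \<mu>^(-n-1) (D_\<phi>)^n g, where (D_\<phi>)^n g = a^(n(n-1)/2) g^(n) \<circ> \<phi>^n.
  For n \<ge> 1 the iterate \<phi>^n maps the disk into the closed disk of radius \<rho> = |a| + |b| < 1.
  There the Cauchy estimates, together with the mean value bound |h(w)| \<lesssim> \<parallel>h\<parallel>_{H^p},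
  give |g^(n)| \<lesssim> (n-1)! \<delta>^(1-n) \<parallel>g'\<parallel>_{H^p} with \<delta> = (1 - \<rho>)/2. The factor a^(n(n-1)/2)
  beats this factorial growth, so the series converges uniformly with its derivative, and
  apart from its first term it is bounded by a multiple of \<parallel>g\<parallel>_{S^p}; hence it is a bounded
  operator on S^p. Finally 0 is in the spectrum because D_\<phi> annihilates the constants.\<close>

section \<open>Estimates in the Hardy space\<close>

lemma circle_mean_nonneg: "circle_mean p h r \<ge> 0"
proof -
  have "integral {0..2*pi} (\<lambda>t. norm (h (complex_of_real r * cis t)) powr p) \<ge> 0"
    by (cases "(\<lambda>t. norm (h (complex_of_real r * cis t)) powr p) integrable_on {0..2*pi}")
       (auto intro: integral_nonneg simp: not_integrable_integral)
  thus ?thesis unfolding circle_mean_def by simp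
qed

lemma Hp_norm_nonneg: "Hp_norm p h \<ge> 0"
  unfolding Hp_norm_def by simp

lemma continuous_on_circle:
  assumes "continuous_on (ball 0 1) h" "0 \<le> r" "r < 1"
  shows "continuous_on {0..2*pi} (\<lambda>t. h (complex_of_real r * cis t))"
proof -
  have "continuous_on {0..2*pi} (\<lambda>t. complex_of_real r * cis t)"
    by (intro continuous_intros)
  moreover have "(\<lambda>t. complex_of_real r * cis t) ` {0..2*pi} \<subseteq> ball 0 1"
    using assms by (auto simp: norm_mult)
  ultimately show ?thesis
    by (intro continuous_on_compose2[OF assms(1)]) auto
qed

lemma integrable_circle_norm_powr:
  assumes "continuous_on (ball 0 1) h" "0 \<le> r" "r < 1" "q > 0"
  shows "(\<lambda>t. norm (h (complex_of_real r * cis t)) powr q) integrable_on {0..2*pi}"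
  using assms
  by (intro integrable_continuous_interval continuous_on_powr' continuous_on_norm
      continuous_on_circle continuous_on_const) auto

lemma circle_mean_1_eq:
  "circle_mean 1 h r = integral {0..2*pi} (\<lambda>t. norm (h (complex_of_real r * cis t))) / (2*pi)"
  by (simp add: circle_mean_def)

lemma norm_le_circle_mean_1:
  assumes h: "h holomorphic_on ball 0 1" and r: "0 < r" "r < 1" and w: "norm w < r"
  shows "norm (h w) \<le> r / (r - norm w) * circle_mean 1 h r"
proof -
  define K where "K = r / (r - norm w)"
  have "cball 0 r \<subseteq> ball (0::complex) 1" using r by auto
  hence "continuous_on (cball 0 r) h"
    using holomorphic_on_imp_continuous_on[OF h] continuous_on_subset by blast
  moreover have "h holomorphic_on ball 0 r"
    by (rule holomorphic_on_subset[OF h]) (use r in auto)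
  ultimately have "((\<lambda>u. h u / (u - w)) has_contour_integral (2 * of_real pi * \<i> * h w)) (circlepath 0 r)"
    by (rule Cauchy_integral_circlepath) (use w in simp)
  hence I: "((\<lambda>t. h (0 + r * cis t) / ((0 + r * cis t) - w) * r * \<i> * cis t)
      has_integral (2 * of_real pi * \<i> * h w)) {0..2*pi}"
    unfolding circlepath_def by (subst (asm) has_contour_integral_part_circlepath_iff) auto
  have J: "(\<lambda>t. norm (h (complex_of_real r * cis t)) * K) integrable_on {0..2*pi}"
    using integrable_circle_norm_powr[of h r 1] holomorphic_on_imp_continuous_on[OF h] r
    by (intro integrable_on_mult_left) simp
  have bound: "norm (h (0 + r * cis t) / ((0 + r * cis t) - w) * r * \<i> * cis t)
      \<le> norm (h (complex_of_real r * cis t)) * K" for t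
  proof -
    have "r - norm w \<le> norm (complex_of_real r * cis t - w)"
      using norm_triangle_ineq2[of "complex_of_real r * cis t" w] r by (simp add: norm_mult)
    moreover have "r - norm w > 0" using w by simp
    ultimately have "norm (h (complex_of_real r * cis t)) * r / norm (complex_of_real r * cis t - w)
        \<le> norm (h (complex_of_real r * cis t)) * r / (r - norm w)"
      using r by (intro divide_left_mono mult_pos_pos) auto
    thus ?thesis using r by (simp add: K_def norm_mult norm_divide)
  qed
  have "2 * pi * norm (h w) = norm (2 * of_real pi * \<i> * h w)"
    by (simp add: norm_mult)
  also have "\<dots> \<le> integral {0..2*pi} (\<lambda>t. norm (h (complex_of_real r * cis t)) * K)"
    using integral_norm_bound_integral[OF has_integral_integrable[OF I] J bound] integral_unique[OF I]
    by simp
  also have "\<dots> = 2 * pi * (K * circle_mean 1 h r)"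
    by (simp add: circle_mean_1_eq)
  finally have "norm (h w) \<le> K * circle_mean 1 h r"
    by (rule mult_left_le_imp_le) simp
  thus ?thesis unfolding K_def .
qed

lemma le_add_powr_one_minus:
  fixes x t p :: real
  assumes "x \<ge> 0" "t > 0" "p \<ge> 1"
  shows "x \<le> t + t powr (1 - p) * x powr p"
proof (cases "x \<le> t")
  case True thus ?thesis by (simp add: add_increasing2)
next
  case False
  hence "x / t \<le> (x / t) powr p"
    using powr_mono[of 1 p "x / t"] assms by simp
  hence "x \<le> t * (x / t) powr p" using assms by (simp add: field_simps)
  also have "t * (x / t) powr p = t powr (1 - p) * x powr p"
    using assms False by (simp add: powr_divide powr_diff field_simps)
  finally show ?thesis using assms by (simp add: add_increasing)
qed

lemma circle_mean_1_le:
  assumes "continuous_on (ball 0 1) h" "0 \<le> r" "r < 1" "p \<ge> 1" "t > 0"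
  shows "circle_mean 1 h r \<le> t + t powr (1 - p) * circle_mean p h r"
proof -
  let ?h = "\<lambda>s. norm (h (complex_of_real r * cis s))"
  have int: "(\<lambda>s. ?h s powr p) integrable_on {0..2*pi}"
    using integrable_circle_norm_powr[OF assms(1-3)] assms(4) by simp
  have "integral {0..2*pi} ?h \<le> integral {0..2*pi} (\<lambda>s. t + t powr (1 - p) * ?h s powr p)"
    using integrable_circle_norm_powr[of h r 1] int assms
    by (intro integral_le integrable_add integrable_on_mult_right le_add_powr_one_minus) auto
  also have "\<dots> = 2*pi*t + t powr (1 - p) * integral {0..2*pi} (\<lambda>s. ?h s powr p)"
    using int by (subst integral_add) (auto intro!: integrable_on_mult_right)
  finally have "integral {0..2*pi} ?h / (2*pi)
      \<le> (2*pi*t + t powr (1 - p) * integral {0..2*pi} (\<lambda>s. ?h s powr p)) / (2*pi)"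
    by (simp add: divide_right_mono)
  also have "\<dots> = t + t powr (1 - p) * (integral {0..2*pi} (\<lambda>s. ?h s powr p) / (2*pi))"
    by (simp add: field_simps)
  finally show ?thesis unfolding circle_mean_1_eq by (simp only: circle_mean_def)
qed

lemma circle_mean_1_le_Hp_norm:
  assumes p: "p \<ge> 1" and h: "in_Hp p h" and r: "0 < r" "r < 1"
  shows "circle_mean 1 h r \<le> 2 * Hp_norm p h"
proof -
  have cont: "continuous_on (ball 0 1) h"
    using h holomorphic_on_imp_continuous_on unfolding in_Hp_def by blast
  define S where "S = (SUP r\<in>{0<..<1}. circle_mean p h r)"
  have "circle_mean p h r \<le> S"
    unfolding S_def using h r by (intro cSUP_upper) (auto simp: in_Hp_def)
  hence mean: "circle_mean 1 h r \<le> t + t powr (1 - p) * S" if "t > 0" for t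
  proof -
    have "t powr (1 - p) * circle_mean p h r \<le> t powr (1 - p) * S"
      using \<open>circle_mean p h r \<le> S\<close> by (simp add: mult_left_mono)
    thus ?thesis using circle_mean_1_le[OF cont _ r(2) p that] r by linarith
  qed
  have "S \<ge> 0" using \<open>circle_mean p h r \<le> S\<close> circle_mean_nonneg[of p h r] by linarith
  show ?thesis
  proof (cases "S = 0")
    case True
    have "circle_mean 1 h r \<le> 0"
      by (rule field_le_epsilon) (use mean True in simp)
    thus ?thesis using Hp_norm_nonneg[of p h] by linarith
  next
    case False
    with \<open>S \<ge> 0\<close> have "S > 0" by simp
    \<comment> \<open>the choice \<open>t = S powr (1/p)\<close> balances the two terms\<close>
    have "(S powr (1/p)) powr (1 - p) * S = S powr ((1 - p)/p + 1)"
      using \<open>S > 0\<close> by (simp add: powr_powr powr_add)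
    also have "(1 - p)/p + 1 = 1/p" using p by (simp add: field_simps)
    finally show ?thesis
      using mean[of "S powr (1/p)"] \<open>S > 0\<close> unfolding Hp_norm_def S_def by simp
  qed
qed

lemma norm_le_Hp_norm:
  assumes "p \<ge> 1" "in_Hp p h" "norm w \<le> s" "s < 1"
  shows "norm (h w) \<le> 2 * (1 + s) / (1 - s) * Hp_norm p h"
proof -
  define r where "r = (1 + s) / 2"
  have "0 \<le> s" using assms(3) norm_ge_zero[of w] by linarith
  hence r: "0 < r" "r < 1" "norm w < r" using assms by (auto simp: r_def)
  have "norm (h w) \<le> r / (r - norm w) * circle_mean 1 h r"
    using norm_le_circle_mean_1 r assms(2) unfolding in_Hp_def by blast
  also have "\<dots> \<le> r / (r - s) * (2 * Hp_norm p h)"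
  proof (rule mult_mono)
    show "r / (r - norm w) \<le> r / (r - s)"
      using r assms(3) by (intro divide_left_mono mult_pos_pos) (auto simp: r_def field_simps)
  qed (use circle_mean_1_le_Hp_norm[OF assms(1,2) r(1,2)] circle_mean_nonneg[of 1 h r] r assms(3)
      in \<open>auto simp: r_def\<close>)
  also have "\<dots> = 2 * (1 + s) / (1 - s) * Hp_norm p h"
    using assms \<open>0 \<le> s\<close> by (simp add: r_def field_simps)
  finally show ?thesis .
qed

lemma norm_higher_deriv_le_Hp_norm:
  assumes p: "p \<ge> 1" and f: "f holomorphic_on ball 0 1" "in_Hp p (deriv f)"
    and \<delta>: "0 < \<delta>" "norm v + \<delta> \<le> s" "s < 1" and n: "n \<ge> 1"
  shows "norm ((deriv^^n) f v) \<le> fact (n - 1) * (2 * (1 + s) / (1 - s) * Hp_norm p (deriv f)) / \<delta>^(n - 1)"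
proof -
  obtain m where m: "n = Suc m" using n by (cases n) auto
  have "cball v \<delta> \<subseteq> ball 0 1"
  proof
    fix x assume "x \<in> cball v \<delta>"
    hence "norm x \<le> norm v + \<delta>"
      using norm_triangle_ineq2[of x v] by (simp add: dist_norm norm_minus_commute)
    thus "x \<in> ball 0 1" using \<delta> by simp
  qed
  moreover have "deriv f holomorphic_on ball 0 1" by (rule holomorphic_deriv[OF f(1)]) simp
  ultimately have "deriv f holomorphic_on ball v \<delta>" "continuous_on (cball v \<delta>) (deriv f)"
    by (meson ball_subset_cball holomorphic_on_subset holomorphic_on_imp_continuous_on
        continuous_on_subset order_trans)+
  hence "norm ((deriv^^m) (deriv f) v) \<le> fact m * (2 * (1 + s) / (1 - s) * Hp_norm p (deriv f)) / \<delta>^m"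
  proof (intro Cauchy_inequality \<delta>(1))
    fix x assume "norm (v - x) = \<delta>"
    hence "norm x \<le> s" using norm_triangle_ineq2[of x v] \<delta> by (simp add: norm_minus_commute)
    thus "norm (deriv f x) \<le> 2 * (1 + s) / (1 - s) * Hp_norm p (deriv f)"
      by (rule norm_le_Hp_norm[OF p f(2) _ \<delta>(3)])
  qed
  thus ?thesis unfolding m funpow_Suc_right by simp
qed

lemma powr_add_le_two_powr:
  fixes x y q :: real
  assumes "x \<ge> 0" "y \<ge> 0" "q > 0"
  shows "(x + y) powr q \<le> 2 powr q * (x powr q + y powr q)"
proof -
  have "(x + y) powr q \<le> (2 * max x y) powr q" by (intro powr_mono2) (use assms in auto)
  also have "\<dots> = 2 powr q * max x y powr q" using assms by (simp add: powr_mult)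
  also have "\<dots> \<le> 2 powr q * (x powr q + y powr q)" by (auto simp: max_def)
  finally show ?thesis .
qed

lemma circle_mean_le_of_norm_le:
  assumes F: "continuous_on (ball 0 1) F" and u: "continuous_on (ball 0 1) u"
    and r: "0 \<le> r" "r < 1" and p: "p > 0" and "c \<ge> 0" "E \<ge> 0"
    and le: "\<And>w. w \<in> ball 0 1 \<Longrightarrow> norm (F w) \<le> c * norm (u w) + E"
  shows "circle_mean p F r \<le> 2 powr p * (c powr p * circle_mean p u r + E powr p)"
proof -
  let ?F = "\<lambda>t. norm (F (complex_of_real r * cis t)) powr p"
  let ?u = "\<lambda>t. norm (u (complex_of_real r * cis t)) powr p"
  have "?F t \<le> 2 powr p * (c powr p * ?u t + E powr p)" for t
  proof -
    have "complex_of_real r * cis t \<in> ball 0 1" using r by (simp add: norm_mult)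
    hence "?F t \<le> (c * norm (u (complex_of_real r * cis t)) + E) powr p"
      using le p by (intro powr_mono2) auto
    also have "\<dots> \<le> 2 powr p * ((c * norm (u (complex_of_real r * cis t))) powr p + E powr p)"
      using assms by (intro powr_add_le_two_powr) auto
    finally show ?thesis using \<open>c \<ge> 0\<close> by (simp add: powr_mult)
  qed
  hence "integral {0..2*pi} ?F \<le> integral {0..2*pi} (\<lambda>t. 2 powr p * (c powr p * ?u t + E powr p))"
    using integrable_circle_norm_powr[OF F r p] integrable_circle_norm_powr[OF u r p]
    by (intro integral_le) (auto intro!: integrable_on_mult_right integrable_add)
  also have "\<dots> = 2 powr p * (c powr p * integral {0..2*pi} ?u + 2*pi * E powr p)"
    using integrable_circle_norm_powr[OF u r p]
    by (subst integral_mult_right, subst integral_add) (auto intro!: integrable_on_mult_right)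
  finally show ?thesis
    unfolding circle_mean_def by (simp add: field_simps)
qed

lemma Hp_norm_le_of_circle_mean_le:
  assumes "p > 0" "\<And>r. r \<in> {0<..<1} \<Longrightarrow> circle_mean p h r \<le> Q"
  shows "bdd_above (circle_mean p h ` {0<..<1})" and "Hp_norm p h \<le> Q powr (1/p)"
proof -
  show bdd: "bdd_above (circle_mean p h ` {0<..<1})"
    using assms(2) by (intro bdd_aboveI2)
  have "0 \<le> (SUP r\<in>{0<..<1}. circle_mean p h r)"
    using cSUP_upper[OF _ bdd, of "1/2"] circle_mean_nonneg[of p h "1/2"] by auto
  moreover have "(SUP r\<in>{0<..<1}. circle_mean p h r) \<le> Q"
    using assms(2) by (intro cSUP_least) auto
  ultimately show "Hp_norm p h \<le> Q powr (1/p)"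
    unfolding Hp_norm_def using assms(1) by (intro powr_mono2) auto
qed

lemma in_Hp_near:
  assumes p: "p \<ge> 1" and u: "in_Hp p u" and F: "F holomorphic_on ball 0 1"
    and near: "\<And>w. w \<in> ball 0 1 \<Longrightarrow> norm (F w - c * u w) \<le> E"
  shows "in_Hp p F" and "Hp_norm p F \<le> 4 * (norm c * Hp_norm p u + E)"
proof -
  have "norm (F 0 - c * u 0) \<le> E" by (rule near) simp
  hence E: "E \<ge> 0" by (rule order_trans[OF norm_ge_zero])
  define S where "S = (SUP r\<in>{0<..<1}. circle_mean p u r)"
  have uS: "circle_mean p u r \<le> S" if "r \<in> {0<..<1}" for r
    unfolding S_def using u that by (intro cSUP_upper) (auto simp: in_Hp_def)
  have S: "S \<ge> 0" using uS[of "1/2"] circle_mean_nonneg[of p u "1/2"] by auto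
  define Q where "Q = 2 powr p * (norm c powr p * S + E powr p)"
  have "circle_mean p F r \<le> Q" if r: "r \<in> {0<..<1}" for r
  proof -
    have "norm (F w) \<le> norm c * norm (u w) + E" if "w \<in> ball 0 1" for w
      using near[OF that] norm_triangle_ineq2[of "F w" "c * u w"] by (simp add: norm_mult)
    hence "circle_mean p F r \<le> 2 powr p * (norm c powr p * circle_mean p u r + E powr p)"
      using F u r p E unfolding in_Hp_def
      by (intro circle_mean_le_of_norm_le holomorphic_on_imp_continuous_on) auto
    also have "\<dots> \<le> Q"
      unfolding Q_def using uS[OF r] by (intro mult_left_mono add_right_mono) auto
    finally show ?thesis .
  qed
  note HQ = Hp_norm_le_of_circle_mean_le[of p F Q, OF _ this]
  show "in_Hp p F" using HQ(1) F p unfolding in_Hp_def by simp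
  have "Q powr (1/p) = 2 * (norm c powr p * S + E powr p) powr (1/p)"
    unfolding Q_def using p S E by (simp add: powr_mult powr_powr)
  also have "\<dots> \<le> 2 * (2 powr (1/p) * ((norm c powr p * S) powr (1/p) + (E powr p) powr (1/p)))"
    using p S by (intro mult_left_mono powr_add_le_two_powr) auto
  also have "(norm c powr p * S) powr (1/p) = norm c * Hp_norm p u"
    unfolding Hp_norm_def S_def[symmetric] using p S by (simp add: powr_mult powr_powr)
  also have "(E powr p) powr (1/p) = E" using p E by (simp add: powr_powr)
  also have "2 * (2 powr (1/p) * (norm c * Hp_norm p u + E)) \<le> 2 * (2 * (norm c * Hp_norm p u + E))"
    using p E Hp_norm_nonneg[of p u] powr_mono[of "1/p" 1 2]
    by (intro mult_left_mono mult_right_mono) auto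
  finally show "Hp_norm p F \<le> 4 * (norm c * Hp_norm p u + E)"
    using HQ(2) p by simp
qed

lemma in_Hp_zero_on_disc:
  assumes "\<And>w. w \<in> ball 0 1 \<Longrightarrow> h w = 0"
  shows "in_Hp p h"
proof -
  have "h holomorphic_on ball 0 1"
    by (rule holomorphic_transform[of "\<lambda>_. 0"]) (use assms in auto)
  moreover have "circle_mean p h r = 0" if "r \<in> {0<..<1}" for r
    using assms that unfolding circle_mean_def by (simp add: norm_mult)
  ultimately show ?thesis
    unfolding in_Hp_def by (auto intro: bdd_aboveI2[where M=0])
qed

section \<open>Iterates of the affine symbol\<close>

definition affine_map :: "complex \<Rightarrow> complex \<Rightarrow> complex \<Rightarrow> complex" where
  "affine_map a b = (\<lambda>z. a * z + b)"

lemma norm_affine_map_le: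
  assumes "norm z \<le> 1"
  shows "norm (affine_map a b z) \<le> norm a + norm b"
proof -
  have "norm (affine_map a b z) \<le> norm a * norm z + norm b"
    unfolding affine_map_def using norm_triangle_ineq[of "a * z" b] by (simp add: norm_mult)
  also have "\<dots> \<le> norm a + norm b" using assms mult_left_le[of "norm z" "norm a"] by simp
  finally show ?thesis .
qed

lemma affine_map_in_ball:
  assumes "norm a + norm b < 1" "z \<in> ball 0 1"
  shows "affine_map a b z \<in> ball 0 1"
  using norm_affine_map_le[of z a b] assms by simp

lemma affine_iter_in_ball:
  assumes "norm a + norm b < 1" "z \<in> ball 0 1"
  shows "(affine_map a b ^^ n) z \<in> ball 0 1"
proof (induction n)
  case (Suc n)
  thus ?case using affine_map_in_ball[OF assms(1)] by simp
qed (use assms in simp)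

lemma norm_affine_iter_le:
  assumes "norm a + norm b < 1" "z \<in> ball 0 1" "n \<ge> 1"
  shows "norm ((affine_map a b ^^ n) z) \<le> norm a + norm b"
proof -
  obtain m where "n = Suc m" using assms(3) by (cases n) auto
  thus ?thesis
    using norm_affine_map_le affine_iter_in_ball[OF assms(1,2), of m] by simp
qed

lemma has_field_derivative_affine_iter:
  "((affine_map a b ^^ n) has_field_derivative a ^ n) (at z)"
proof (induction n arbitrary: z)
  case (Suc n)
  have "(affine_map a b has_field_derivative a) (at w)" for w
    unfolding affine_map_def by (auto intro!: derivative_eq_intros)
  from DERIV_chain[OF this Suc.IH] show ?case by (simp add: comp_def)
qed (simp add: id_def)

definition iter_coef :: "complex \<Rightarrow> nat \<Rightarrow> complex" where
  "iter_coef a n = (\<Prod>k<n. a ^ k)"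

lemma iter_coef_0 [simp]: "iter_coef a 0 = 1"
  by (simp add: iter_coef_def)

lemma iter_coef_Suc: "iter_coef a (Suc n) = iter_coef a n * a ^ n"
  by (simp add: iter_coef_def)

definition resolvent_weight :: "complex \<Rightarrow> complex \<Rightarrow> real \<Rightarrow> nat \<Rightarrow> real" where
  "resolvent_weight a \<nu> \<delta> n = norm \<nu> ^ n * norm (iter_coef a n) * fact (n - 1) / \<delta> ^ (n - 1)"

lemma resolvent_weight_nonneg: "\<delta> > 0 \<Longrightarrow> resolvent_weight a \<nu> \<delta> n \<ge> 0"
  by (simp add: resolvent_weight_def)

lemma summable_resolvent_weight:
  assumes a: "norm a < 1" and \<delta>: "\<delta> > 0"
  shows "summable (resolvent_weight a \<nu> \<delta>)"
proof -
  \<comment> \<open>the ratio of consecutive weights is \<open>norm \<nu> / \<delta> * n * norm a ^ n\<close>, which tends to 0\<close>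
  define q where "q n = norm \<nu> / \<delta> * (of_nat n * norm a ^ n)" for n
  have "(\<lambda>n. of_nat n * norm a ^ n) \<longlonglongrightarrow> (0::real)"
    by (rule powser_times_n_limit_0) (use a in simp)
  hence "q \<longlonglongrightarrow> 0" unfolding q_def by (rule tendsto_mult_right_zero)
  hence "eventually (\<lambda>n. norm (q n) < 1/2) sequentially"
    by (rule order_tendstoD(2)[OF tendsto_norm_zero]) simp
  then obtain N where N: "\<And>n. n \<ge> N \<Longrightarrow> norm (q n) < 1/2"
    unfolding eventually_sequentially by auto
  show ?thesis
  proof (rule summable_ratio_test[of "1/2" "max N 1"])
    fix n assume n: "n \<ge> max N 1"
    then obtain m where m: "n = Suc m" by (cases n) auto
    have "resolvent_weight a \<nu> \<delta> (Suc n) = resolvent_weight a \<nu> \<delta> n * q n"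
      unfolding resolvent_weight_def q_def m using \<delta>
      by (simp add: iter_coef_Suc norm_mult norm_power field_simps)
    also have "\<dots> \<le> resolvent_weight a \<nu> \<delta> n * (1/2)"
      using N[of n] n resolvent_weight_nonneg[OF \<delta>] by (intro mult_left_mono) auto
    finally show "norm (resolvent_weight a \<nu> \<delta> (Suc n)) \<le> 1/2 * norm (resolvent_weight a \<nu> \<delta> n)"
      using resolvent_weight_nonneg[OF \<delta>] by (simp add: mult.commute)
  qed simp
qed

lemma
  assumes ab: "norm a + norm b < 1" and f: "f holomorphic_on ball 0 1"
  shows holomorphic_on_Dphi_affine: "Dphi (affine_map a b) f holomorphic_on ball 0 1"
    and higher_deriv_Dphi_affine: "w \<in> ball 0 1 \<Longrightarrow>
      (deriv^^n) (Dphi (affine_map a b) f) w = a ^ n * (deriv^^Suc n) f (affine_map a b w)"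
proof -
  have maps: "a * z + b \<in> ball 0 1" if "z \<in> ball 0 1" for z
    using affine_map_in_ball[OF ab that] by (simp add: affine_map_def)
  have f': "deriv f holomorphic_on ball 0 1" by (rule holomorphic_deriv[OF f]) simp
  have "(\<lambda>z. a * z + b) ` ball 0 1 \<subseteq> ball 0 1" using maps by auto
  from holomorphic_on_compose_gen[OF _ f' this, unfolded o_def]
  have D: "(\<lambda>z. deriv f (a * z + b)) holomorphic_on ball 0 1"
    by (simp add: holomorphic_intros)
  have eq: "Dphi (affine_map a b) f z = deriv f (a * z + b)" if "z \<in> ball 0 1" for z
    using that by (simp add: Dphi_def affine_map_def)
  show hol: "Dphi (affine_map a b) f holomorphic_on ball 0 1"
    by (rule holomorphic_transform[OF D]) (simp add: eq)
  assume w: "w \<in> ball 0 1"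
  have "(deriv^^n) (Dphi (affine_map a b) f) w = (deriv^^n) (\<lambda>z. deriv f (a * z + b)) w"
    by (rule higher_deriv_transform_within_open[OF hol D open_ball w eq])
  also have "\<dots> = a ^ n * (deriv^^n) (deriv f) (a * w + b)"
    by (rule higher_deriv_compose_linear'[OF f' open_ball open_ball w maps])
  finally show "(deriv^^n) (Dphi (affine_map a b) f) w = a ^ n * (deriv^^Suc n) f (affine_map a b w)"
    by (simp only: funpow_Suc_right o_apply affine_map_def)
qed

section \<open>The resolvent of D_\<phi>\<close>

locale affine_resolvent =
  fixes p :: real and a b \<nu> :: complex
  assumes p: "p \<ge> 1" and ab: "norm a + norm b < 1" and \<nu>: "\<nu> \<noteq> 0"
begin

abbreviation \<phi> :: "complex \<Rightarrow> complex" where "\<phi> \<equiv> affine_map a b"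

definition gap :: real where "gap = (1 - (norm a + norm b)) / 2"

text \<open>The constant 2(1 + s)/(1 - s) of \<open>norm_le_Hp_norm\<close> for the radius s = 1 - gap, which
  contains the gap-neighbourhood of every \<phi>^n(z), n \<ge> 1.\<close>
definition deriv_const :: real where "deriv_const = 2 * (2 - gap) / gap"

lemma gap_pos: "gap > 0"
  using ab by (simp add: gap_def)

lemma deriv_const_nonneg: "deriv_const \<ge> 0"
proof -
  have "gap \<le> 2" unfolding gap_def using norm_ge_zero[of a] norm_ge_zero[of b] by (simp add: field_simps)
  thus ?thesis using gap_pos by (simp add: deriv_const_def)
qed

lemma norm_higher_deriv_le:
  assumes "g holomorphic_on ball 0 1" "in_Hp p (deriv g)" "norm v \<le> norm a + norm b" "n \<ge> 1"
  shows "norm ((deriv^^n) g v) \<le> fact (n - 1) * (deriv_const * Hp_norm p (deriv g)) / gap ^ (n - 1)"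
proof -
  have "norm v + gap \<le> 1 - gap" using assms(3) by (simp add: gap_def field_simps)
  moreover have "2 * (1 + (1 - gap)) / (1 - (1 - gap)) = deriv_const"
    by (simp add: deriv_const_def)
  ultimately show ?thesis
    using norm_higher_deriv_le_Hp_norm[OF p assms(1,2) gap_pos, of v "1 - gap" n] assms(4) gap_pos
    by simp
qed

definition resolvent_term :: "nat \<Rightarrow> (complex \<Rightarrow> complex) \<Rightarrow> complex \<Rightarrow> complex" where
  "resolvent_term n g v = \<nu> ^ n * iter_coef a n * (deriv^^n) g v"

text \<open>On the disk (D_\<phi>)^n g = iter_coef a n * g^(n) \<circ> \<phi>^n, so this is the Neumann series
  \<nu> \<Sum>n. (\<nu> D_\<phi>)^n g for the inverse of \<nu>\<inverse> - D_\<phi>.\<close>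
definition resolvent :: "(complex \<Rightarrow> complex) \<Rightarrow> complex \<Rightarrow> complex" where
  "resolvent g z = (if z \<in> ball 0 1 then \<Sum>n. \<nu> * resolvent_term n g ((\<phi> ^^ n) z) else 0)"

lemma resolvent_term_0 [simp]: "resolvent_term 0 g v = g v"
  by (simp add: resolvent_term_def)

lemma resolvent_term_Suc_0 [simp]: "resolvent_term (Suc 0) g v = \<nu> * deriv g v"
  by (simp add: resolvent_term_def iter_coef_def)

lemma norm_resolvent_term_le:
  assumes "g holomorphic_on ball 0 1" "in_Hp p (deriv g)" "norm v \<le> norm a + norm b" "n \<ge> 1"
  shows "norm (resolvent_term n g v)
    \<le> resolvent_weight a \<nu> gap n * (deriv_const * Hp_norm p (deriv g))"
proof -
  have "norm (\<nu> ^ n * iter_coef a n) * norm ((deriv^^n) g v)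
      \<le> norm (\<nu> ^ n * iter_coef a n) * (fact (n - 1) * (deriv_const * Hp_norm p (deriv g)) / gap ^ (n - 1))"
    using norm_higher_deriv_le[OF assms] by (rule mult_left_mono) simp
  thus ?thesis
    unfolding resolvent_term_def resolvent_weight_def by (simp add: norm_mult norm_power)
qed

lemma has_field_derivative_resolvent_term:
  assumes g: "g holomorphic_on ball 0 1" and x: "x \<in> ball 0 1"
  shows "((\<lambda>z. \<nu> * resolvent_term n g ((\<phi> ^^ n) z))
    has_field_derivative resolvent_term (Suc n) g ((\<phi> ^^ n) x)) (at x)"
proof -
  have "(deriv^^n) g holomorphic_on ball 0 1" by (rule holomorphic_higher_deriv[OF g]) simp
  hence "((deriv^^n) g has_field_derivative (deriv^^Suc n) g ((\<phi> ^^ n) x)) (at ((\<phi> ^^ n) x))"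
    using holomorphic_derivI[OF _ open_ball affine_iter_in_ball[OF ab x]] by simp
  from DERIV_chain2[OF this has_field_derivative_affine_iter]
  have "((\<lambda>z. (deriv^^n) g ((\<phi> ^^ n) z)) has_field_derivative
      (deriv^^Suc n) g ((\<phi> ^^ n) x) * a ^ n) (at x)" .
  from DERIV_cmult[OF this, of "\<nu> * \<nu> ^ n * iter_coef a n"] show ?thesis
    unfolding resolvent_term_def iter_coef_Suc by (simp add: mult_ac)
qed

lemma norm_a_less_1: "norm a < 1"
  using ab norm_ge_zero[of b] by linarith

lemma
  assumes g: "g \<in> Sp p"
  shows resolvent_sums:
      "z \<in> ball 0 1 \<Longrightarrow> (\<lambda>n. \<nu> * resolvent_term n g ((\<phi> ^^ n) z)) sums resolvent g z"
    and holomorphic_on_resolvent: "resolvent g holomorphic_on ball 0 1"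
    and deriv_resolvent_sums:
      "z \<in> ball 0 1 \<Longrightarrow> (\<lambda>n. resolvent_term (Suc n) g ((\<phi> ^^ n) z)) sums deriv (resolvent g) z"
proof -
  have g': "g holomorphic_on ball 0 1" "in_Hp p (deriv g)" using g by (auto simp: Sp_def)
  define M where "M n = norm \<nu> * resolvent_weight a \<nu> gap n * (deriv_const * Hp_norm p (deriv g))" for n
  have "summable M"
    unfolding M_def using summable_resolvent_weight[OF norm_a_less_1 gap_pos]
    by (intro summable_mult summable_mult2)
  have "norm (\<nu> * resolvent_term n g ((\<phi> ^^ n) x)) \<le> M n" if "n \<ge> 1" "x \<in> ball 0 1" for n x
  proof -
    have "norm (resolvent_term n g ((\<phi> ^^ n) x))
        \<le> resolvent_weight a \<nu> gap n * (deriv_const * Hp_norm p (deriv g))"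
      by (rule norm_resolvent_term_le[OF g' norm_affine_iter_le[OF ab that(2,1)] that(1)])
    thus ?thesis unfolding M_def by (simp add: norm_mult mult.assoc mult_left_mono)
  qed
  hence ev: "\<forall>\<^sub>F n in sequentially. \<forall>x\<in>ball 0 1. norm (\<nu> * resolvent_term n g ((\<phi> ^^ n) x)) \<le> M n"
    by (intro eventually_sequentiallyI[of 1]) auto
  obtain G G' where "\<forall>x\<in>ball 0 1.
      ((\<lambda>n. \<nu> * resolvent_term n g ((\<phi> ^^ n) x)) sums G x) \<and>
      ((\<lambda>n. resolvent_term (Suc n) g ((\<phi> ^^ n) x)) sums G' x) \<and> (G has_field_derivative G' x) (at x)"
    by (rule series_and_derivative_comparison[OF open_ball \<open>summable M\<close>
          has_field_derivative_resolvent_term[OF g'(1)] ev])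
  hence GG: "((\<lambda>n. \<nu> * resolvent_term n g ((\<phi> ^^ n) x)) sums G x)"
      "((\<lambda>n. resolvent_term (Suc n) g ((\<phi> ^^ n) x)) sums G' x)"
      "(G has_field_derivative G' x) (at x)" if "x \<in> ball 0 1" for x
    using that by blast+
  have RG: "resolvent g x = G x" if "x \<in> ball 0 1" for x
    using sums_unique[OF GG(1)[OF that]] that unfolding resolvent_def by simp
  have RD: "(resolvent g has_field_derivative G' x) (at x)" if x: "x \<in> ball 0 1" for x
    by (rule has_field_derivative_transform_within_open[OF _ open_ball x]) (use GG(3)[OF x] RG in auto)
  show "z \<in> ball 0 1 \<Longrightarrow> (\<lambda>n. \<nu> * resolvent_term n g ((\<phi> ^^ n) z)) sums resolvent g z"
    using GG(1) RG by auto
  show "resolvent g holomorphic_on ball 0 1"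
    using RD by (auto simp: holomorphic_on_open intro!: exI)
  show "z \<in> ball 0 1 \<Longrightarrow> (\<lambda>n. resolvent_term (Suc n) g ((\<phi> ^^ n) z)) sums deriv (resolvent g) z"
    using GG(2) RD DERIV_imp_deriv by metis
qed

definition weight_tail :: "nat \<Rightarrow> real" where
  "weight_tail k = (\<Sum>n. resolvent_weight a \<nu> gap (n + k))"

lemma summable_weight_tail: "summable (\<lambda>n. resolvent_weight a \<nu> gap (n + k))"
  using summable_resolvent_weight[OF norm_a_less_1 gap_pos] by (rule summable_ignore_initial_segment)

lemma weight_tail_sums: "(\<lambda>n. resolvent_weight a \<nu> gap (n + k)) sums weight_tail k"
  unfolding weight_tail_def by (rule summable_sums[OF summable_weight_tail])

lemma weight_tail_nonneg: "weight_tail k \<ge> 0"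
  unfolding weight_tail_def
  by (rule suminf_nonneg[OF summable_weight_tail resolvent_weight_nonneg[OF gap_pos]])

lemma norm_resolvent_0_sub_le:
  assumes g: "g \<in> Sp p"
  shows "norm (resolvent g 0 - \<nu> * g 0)
    \<le> norm \<nu> * weight_tail 1 * (deriv_const * Hp_norm p (deriv g))"
proof (rule norm_sums_le)
  show "(\<lambda>n. \<nu> * resolvent_term (Suc n) g ((\<phi> ^^ Suc n) 0)) sums (resolvent g 0 - \<nu> * g 0)"
    using resolvent_sums[OF g, of 0] by (subst sums_Suc_iff) simp
  show "(\<lambda>n. norm \<nu> * resolvent_weight a \<nu> gap (Suc n) * (deriv_const * Hp_norm p (deriv g)))
      sums (norm \<nu> * weight_tail 1 * (deriv_const * Hp_norm p (deriv g)))"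
    using weight_tail_sums[of 1] by (intro sums_mult sums_mult2) simp
  show "norm (\<nu> * resolvent_term (Suc n) g ((\<phi> ^^ Suc n) 0))
      \<le> norm \<nu> * resolvent_weight a \<nu> gap (Suc n) * (deriv_const * Hp_norm p (deriv g))" for n
    using g norm_resolvent_term_le norm_affine_iter_le[OF ab, of 0 "Suc n"]
    by (auto simp: Sp_def norm_mult mult.assoc intro!: mult_left_mono)
qed

lemma norm_deriv_resolvent_sub_le:
  assumes g: "g \<in> Sp p" and z: "z \<in> ball 0 1"
  shows "norm (deriv (resolvent g) z - \<nu> * deriv g z)
    \<le> weight_tail 2 * (deriv_const * Hp_norm p (deriv g))"
proof (rule norm_sums_le)
  show "(\<lambda>n. resolvent_term (Suc (Suc n)) g ((\<phi> ^^ Suc n) z))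
      sums (deriv (resolvent g) z - \<nu> * deriv g z)"
    using deriv_resolvent_sums[OF g z] by (subst sums_Suc_iff) simp
  show "(\<lambda>n. resolvent_weight a \<nu> gap (Suc (Suc n)) * (deriv_const * Hp_norm p (deriv g)))
      sums (weight_tail 2 * (deriv_const * Hp_norm p (deriv g)))"
    using weight_tail_sums[of 2] by (intro sums_mult2) (simp add: numeral_2_eq_2)
  show "norm (resolvent_term (Suc (Suc n)) g ((\<phi> ^^ Suc n) z))
      \<le> resolvent_weight a \<nu> gap (Suc (Suc n)) * (deriv_const * Hp_norm p (deriv g))" for n
    using g z norm_resolvent_term_le norm_affine_iter_le[OF ab, of z "Suc n"] by (auto simp: Sp_def)
qed

definition resolvent_bound :: real where
  "resolvent_bound = 5 * norm \<nu> + (norm \<nu> * weight_tail 1 + 4 * weight_tail 2) * deriv_const"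

lemma
  assumes g: "g \<in> Sp p"
  shows resolvent_in_Sp: "resolvent g \<in> Sp p"
    and Sp_norm_resolvent_le: "Sp_norm p (resolvent g) \<le> resolvent_bound * Sp_norm p g"
proof -
  have g': "g holomorphic_on ball 0 1" "in_Hp p (deriv g)" using g by (auto simp: Sp_def)
  define N where "N = Hp_norm p (deriv g)"
  have H: "in_Hp p (deriv (resolvent g))"
    "Hp_norm p (deriv (resolvent g)) \<le> 4 * (norm \<nu> * N + weight_tail 2 * (deriv_const * N))"
    unfolding N_def
    by (rule in_Hp_near[OF p g'(2) holomorphic_deriv[OF holomorphic_on_resolvent[OF g] open_ball]
          norm_deriv_resolvent_sub_le[OF g]]; assumption)+
  show "resolvent g \<in> Sp p"
    using holomorphic_on_resolvent[OF g] H(1) by (simp add: Sp_def resolvent_def)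
  have "norm (resolvent g 0) \<le> norm \<nu> * norm (g 0) + norm \<nu> * weight_tail 1 * (deriv_const * N)"
    using norm_resolvent_0_sub_le[OF g] norm_triangle_ineq2[of "resolvent g 0" "\<nu> * g 0"]
    unfolding N_def by (simp add: norm_mult)
  hence "Sp_norm p (resolvent g) \<le> norm \<nu> * norm (g 0) + norm \<nu> * weight_tail 1 * (deriv_const * N)
      + 4 * (norm \<nu> * N + weight_tail 2 * (deriv_const * N))"
    using H(2) unfolding Sp_norm_def by linarith
  also have "\<dots> \<le> resolvent_bound * (norm (g 0) + N)"
  proof -
    have "resolvent_bound * (norm (g 0) + N) = norm \<nu> * norm (g 0) + norm \<nu> * weight_tail 1 * (deriv_const * N)
        + 4 * (norm \<nu> * N + weight_tail 2 * (deriv_const * N))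
        + (4 * norm \<nu> * norm (g 0) + (norm \<nu> * weight_tail 1 + 4 * weight_tail 2) * deriv_const * norm (g 0)
          + norm \<nu> * N)"
      unfolding resolvent_bound_def by (simp add: algebra_simps)
    moreover have "0 \<le> (norm \<nu> * weight_tail 1 + 4 * weight_tail 2) * deriv_const * norm (g 0)"
      using weight_tail_nonneg[of 1] weight_tail_nonneg[of 2] deriv_const_nonneg by simp
    moreover have "0 \<le> N" unfolding N_def by (rule Hp_norm_nonneg)
    ultimately show ?thesis by simp
  qed
  finally show "Sp_norm p (resolvent g) \<le> resolvent_bound * Sp_norm p g"
    unfolding Sp_norm_def N_def .
qed

abbreviation shifted_Dphi :: "(complex \<Rightarrow> complex) \<Rightarrow> complex \<Rightarrow> complex" where
  "shifted_Dphi f \<equiv> (\<lambda>z. inverse \<nu> * f z - Dphi \<phi> f z)"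

lemma
  assumes f: "f holomorphic_on ball 0 1"
  shows holomorphic_on_shifted_Dphi: "shifted_Dphi f holomorphic_on ball 0 1"
    and higher_deriv_shifted_Dphi: "w \<in> ball 0 1 \<Longrightarrow>
      (deriv^^n) (shifted_Dphi f) w = inverse \<nu> * (deriv^^n) f w - a ^ n * (deriv^^Suc n) f (\<phi> w)"
proof -
  have D: "Dphi \<phi> f holomorphic_on ball 0 1" by (rule holomorphic_on_Dphi_affine[OF ab f])
  have M: "(\<lambda>z. inverse \<nu> * f z) holomorphic_on ball 0 1" by (intro holomorphic_intros f)
  show "shifted_Dphi f holomorphic_on ball 0 1"
    using holomorphic_on_diff[OF M D] by simp
  assume w: "w \<in> ball 0 1"
  have "(deriv^^n) (shifted_Dphi f) w = (deriv^^n) (\<lambda>z. inverse \<nu> * f z) w - (deriv^^n) (Dphi \<phi> f) w"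
    by (rule higher_deriv_diff[OF M D open_ball w])
  also have "(deriv^^n) (\<lambda>z. inverse \<nu> * f z) w = inverse \<nu> * (deriv^^n) f w"
    by (rule higher_deriv_cmult[OF f w open_ball])
  finally show "(deriv^^n) (shifted_Dphi f) w = inverse \<nu> * (deriv^^n) f w - a ^ n * (deriv^^Suc n) f (\<phi> w)"
    using higher_deriv_Dphi_affine[OF ab f w] by simp
qed

lemma resolvent_term_shifted_Dphi:
  assumes "f holomorphic_on ball 0 1" "w \<in> ball 0 1"
  shows "\<nu> * resolvent_term n (shifted_Dphi f) w = resolvent_term n f w - resolvent_term (Suc n) f (\<phi> w)"
  unfolding resolvent_term_def higher_deriv_shifted_Dphi[OF assms] iter_coef_Suc
  using \<nu> by (simp add: algebra_simps)

lemma shifted_Dphi_in_Sp: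
  assumes f: "f \<in> Sp p"
  shows "shifted_Dphi f \<in> Sp p"
proof -
  have f': "f holomorphic_on ball 0 1" "in_Hp p (deriv f)" using f by (auto simp: Sp_def)
  have H: "shifted_Dphi f holomorphic_on ball 0 1" by (rule holomorphic_on_shifted_Dphi[OF f'(1)])
  have "norm (deriv (shifted_Dphi f) w - inverse \<nu> * deriv f w)
      \<le> norm a * (deriv_const * Hp_norm p (deriv f) / gap)" if w: "w \<in> ball 0 1" for w
  proof -
    have "norm (\<phi> w) \<le> norm a + norm b" using w by (intro norm_affine_map_le) simp
    hence "norm ((deriv^^2) f (\<phi> w)) \<le> deriv_const * Hp_norm p (deriv f) / gap"
      using norm_higher_deriv_le[OF f', of "\<phi> w" 2] by simp
    hence "norm a * norm ((deriv^^2) f (\<phi> w)) \<le> norm a * (deriv_const * Hp_norm p (deriv f) / gap)"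
      by (rule mult_left_mono) simp
    thus ?thesis
      using higher_deriv_shifted_Dphi[OF f'(1) w, of 1] by (simp add: norm_mult numeral_2_eq_2)
  qed
  hence "in_Hp p (deriv (shifted_Dphi f))"
    by (rule in_Hp_near(1)[OF p f'(2) holomorphic_deriv[OF H open_ball]])
  thus ?thesis using H f by (simp add: Sp_def Dphi_def)
qed

lemma resolvent_right_inverse:
  assumes g: "g \<in> Sp p"
  shows "shifted_Dphi (resolvent g) = g"
proof
  fix z
  show "shifted_Dphi (resolvent g) z = g z"
  proof (cases "z \<in> ball 0 1")
    case False thus ?thesis using g by (simp add: Sp_def resolvent_def Dphi_def)
  next
    case True
    define u where "u n = resolvent_term n g ((\<phi> ^^ n) z)" for n
    from deriv_resolvent_sums[OF g affine_map_in_ball[OF ab True]]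
    have "(\<lambda>n. u (Suc n)) sums Dphi \<phi> (resolvent g) z"
      using True by (simp add: u_def Dphi_def funpow_swap1)
    hence "u sums (Dphi \<phi> (resolvent g) z + u 0)" by (simp add: sums_Suc_iff)
    moreover have "u sums (inverse \<nu> * resolvent g z)"
      using sums_mult[OF resolvent_sums[OF g True], of "inverse \<nu>"] \<nu>
      by (simp add: u_def[abs_def] mult.assoc[symmetric])
    ultimately have "inverse \<nu> * resolvent g z = Dphi \<phi> (resolvent g) z + u 0"
      by (rule sums_unique2[symmetric])
    thus ?thesis by (simp add: u_def)
  qed
qed

lemma resolvent_left_inverse:
  assumes f: "f \<in> Sp p"
  shows "resolvent (shifted_Dphi f) = f"
proof
  fix z
  show "resolvent (shifted_Dphi f) z = f z"
  proof (cases "z \<in> ball 0 1")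
    case False thus ?thesis using f by (simp add: Sp_def resolvent_def)
  next
    case True
    have f': "f holomorphic_on ball 0 1" using f by (simp add: Sp_def)
    define u where "u n = resolvent_term n f ((\<phi> ^^ n) z)" for n
    have "(\<lambda>n. \<nu> * u n) \<longlonglongrightarrow> 0"
      using summable_LIMSEQ_zero[OF sums_summable[OF resolvent_sums[OF f True]]] unfolding u_def .
    hence "u \<longlonglongrightarrow> 0"
      using tendsto_mult_right_zero[of "\<lambda>n. \<nu> * u n" sequentially "inverse \<nu>"] \<nu> by simp
    hence "(\<lambda>n. u n - u (Suc n)) sums u 0"
      using telescope_sums'[of u 0] by simp
    moreover have "\<nu> * resolvent_term n (shifted_Dphi f) ((\<phi> ^^ n) z) = u n - u (Suc n)" for n
      using resolvent_term_shifted_Dphi[OF f' affine_iter_in_ball[OF ab True]]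
      by (simp add: u_def funpow_Suc_right)
    ultimately show ?thesis
      using True by (simp add: resolvent_def u_def sums_iff)
  qed
qed

lemma inverse_notin_op_spectrum: "inverse \<nu> \<notin> op_spectrum (Sp p) (Sp_norm p) (Dphi \<phi>)"
proof -
  have "\<exists>C. \<forall>g\<in>Sp p. Sp_norm p (resolvent g) \<le> C * Sp_norm p g"
    using Sp_norm_resolvent_le by blast
  hence "\<exists>R. (\<forall>f\<in>Sp p. shifted_Dphi f \<in> Sp p) \<and>
      (\<forall>g\<in>Sp p. R g \<in> Sp p \<and> shifted_Dphi (R g) = g) \<and>
      (\<forall>f\<in>Sp p. R (shifted_Dphi f) = f) \<and>
      (\<exists>C. \<forall>g\<in>Sp p. Sp_norm p (R g) \<le> C * Sp_norm p g)"
    using shifted_Dphi_in_Sp resolvent_in_Sp resolvent_right_inverse resolvent_left_inverse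
    by (intro exI[of _ resolvent]) blast
  thus ?thesis unfolding op_spectrum_def by blast
qed

end

section \<open>The spectrum\<close>

lemma zero_in_op_spectrum:
  assumes "f \<in> X" "g \<in> X" "T f = T g" "f \<noteq> g"
  shows "0 \<in> op_spectrum X N T"
  unfolding op_spectrum_def
proof (clarify)
  fix R assume inv: "\<forall>f\<in>X. R (\<lambda>z. 0 * f z - T f z) = f"
  have "f = R (\<lambda>z. 0 * f z - T f z)" using inv assms(1) by simp
  also have "\<dots> = R (\<lambda>z. 0 * g z - T g z)" using assms(3) by simp
  also have "\<dots> = g" using inv assms(2) by simp
  finally show False using assms(4) by simp
qed

lemma deriv_disc_constant:
  assumes "w \<in> ball 0 1"
  shows "deriv (\<lambda>z. if z \<in> ball 0 1 then c else 0) w = 0"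
proof (rule DERIV_imp_deriv)
  have "((\<lambda>_. c) has_field_derivative 0) (at w)" by simp
  thus "((\<lambda>z. if z \<in> ball 0 1 then c else 0) has_field_derivative 0) (at w)"
    by (rule has_field_derivative_transform_within_open[OF _ open_ball assms]) simp
qed

lemma disc_constant_in_Sp: "(\<lambda>z. if z \<in> ball 0 1 then c else 0) \<in> Sp p"
proof -
  have "(\<lambda>_. c) holomorphic_on ball 0 1" by simp
  hence "(\<lambda>z. if z \<in> ball 0 1 then c else 0) holomorphic_on ball 0 1"
    by (rule holomorphic_transform) simp
  moreover have "in_Hp p (deriv (\<lambda>z. if z \<in> ball 0 1 then c else 0))"
    by (rule in_Hp_zero_on_disc[OF deriv_disc_constant])
  ultimately show ?thesis by (simp add: Sp_def)
qed

lemma Dphi_disc_constant: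
  assumes "\<And>z. z \<in> ball 0 1 \<Longrightarrow> \<phi> z \<in> ball 0 1"
  shows "Dphi \<phi> (\<lambda>z. if z \<in> ball 0 1 then c else 0) = (\<lambda>z. 0)"
  using assms deriv_disc_constant by (auto simp: Dphi_def fun_eq_iff)

theorem theorem4p1:
  fixes p :: real and a b :: complex
  assumes "p > 1" and "0 < norm a" and "norm a < 1 - norm b"
  shows "op_spectrum (Sp p) (Sp_norm p) (Dphi (\<lambda>z. a * z + b)) = {0}"
proof -
  have ab: "norm a + norm b < 1" using assms(3) by simp
  have "\<mu> \<notin> op_spectrum (Sp p) (Sp_norm p) (Dphi (affine_map a b))" if "\<mu> \<noteq> 0" for \<mu>
  proof -
    interpret affine_resolvent p a b "inverse \<mu>"
      using assms(1) ab that by unfold_locales auto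
    show ?thesis using inverse_notin_op_spectrum that by simp
  qed
  moreover have "0 \<in> op_spectrum (Sp p) (Sp_norm p) (Dphi (affine_map a b))"
  proof (rule zero_in_op_spectrum)
    let ?one = "\<lambda>z. if z \<in> ball 0 1 then 1 else (0::complex)"
    let ?zero = "\<lambda>z. if z \<in> ball 0 1 then 0 else (0::complex)"
    show "Dphi (affine_map a b) ?one = Dphi (affine_map a b) ?zero"
      using affine_map_in_ball[OF ab] by (simp only: Dphi_disc_constant)
    show "?one \<noteq> ?zero" by (auto simp: fun_eq_iff intro: exI[of _ 0])
  qed (rule disc_constant_in_Sp)+
  ultimately show ?thesis unfolding affine_map_def by blast
qed

end
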